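(* Let $n\in\mathbb Z^+$, let $d,d'$ be cyclotomic patterns of index $n$, let $p$ be a prime with $p\equiv1\pmod n$, and let $f,g$ be the periodic sequences of length $p$ from $d$ and $d'$. Then $P_{f,g}(0)=\frac{p-1}{n}\langle d,d'\rangle=(p-1)\langle\hat d,\hat{d'}\rangle$, and for every $u\in\mathbb Z$, \[P_{f,g}(\alpha_p^u)=\sum_{j,k\in\mathbb Z/n\mathbb Z}(k,j)\,d_{j+u}\overline{d'_{k+u}}.\]
   Context: For each prime $p$, $\alpha_p$ is a fixed primitive element of $\mathbb F_p$ and, for $n\mid p-1$, $\mathbb F_p^{*n}$ is the subgroup of $n$th powers, with classes $\alpha_p^k\mathbb F_p^{*n}$ ($k\in\mathbb Z/n\mathbb Z$). The cyclotomic number $(j,k)$ over $\mathbb F_p$ is $|(1+\alpha_p^j\mathbb F_p^{*n})\cap\alpha_p^k\mathbb F_p^{*n}|$, where $1+S=\{1+b:b\in S\}$. A cyclotomic pattern of index $n$ is $d:\mathbb Z/n\mathbb Z\to\mathbb C$; the periodic sequence of length $p$ from $d$ has $f_0=0$, $f_h=d_k$ for $h\in\alpha_p^k\mathbb F_p^{*n}$. $P_{f,g}(s)=\sum_{j\in\mathbb Z/p\mathbb Z}f_{j+s}\overline{g_j}$. $\langle a,b\rangle=\sum a_j\overline{b_j}$, $\hat a_j=n^{-1}\sum_k\exp(-2\pi ijk/n)a_k$. *)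

theory Defs
  imports "HOL-Analysis.Analysis" "HOL-Number_Theory.Number_Theory"
begin

(* Elements of F_p are represented by integers modulo p; alpha :: nat is a
   primitive root modulo p (residue_primroot p alpha). *)

definition cyc_class :: "nat \<Rightarrow> nat \<Rightarrow> nat \<Rightarrow> int \<Rightarrow> int set" where
  "cyc_class p n \<alpha> k =
     {h. \<exists>b::int. \<not> int p dvd b \<and> [h = int \<alpha> ^ nat (k mod int n) * b ^ n] (mod int p)}"

(* alpha_p^u in F_p^* for u \<in> Z (exponent reduced modulo p - 1, the order of alpha) *)
definition alpha_pow :: "nat \<Rightarrow> nat \<Rightarrow> int \<Rightarrow> int" where
  "alpha_pow p \<alpha> u = int \<alpha> ^ nat (u mod (int p - 1))"

definition cyc_seq :: "nat \<Rightarrow> nat \<Rightarrow> nat \<Rightarrow> (int \<Rightarrow> complex) \<Rightarrow> int \<Rightarrow> complex" where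
  "cyc_seq p n \<alpha> d h =
     (if int p dvd h then 0
      else d (THE k. k \<in> {0..<int n} \<and> h \<in> cyc_class p n \<alpha> k))"

definition corr :: "nat \<Rightarrow> (int \<Rightarrow> complex) \<Rightarrow> (int \<Rightarrow> complex) \<Rightarrow> int \<Rightarrow> complex" where
  "corr p f g s = (\<Sum>j\<in>{0..<int p}. f ((j + s) mod int p) * cnj (g j))"

definition cyc_num :: "nat \<Rightarrow> nat \<Rightarrow> nat \<Rightarrow> int \<Rightarrow> int \<Rightarrow> nat" where
  "cyc_num p n \<alpha> j k =
     card {x \<in> {0..<int p}. (\<exists>b \<in> cyc_class p n \<alpha> j. [x = 1 + b] (mod int p))
                            \<and> x \<in> cyc_class p n \<alpha> k}"

definition pat_inner :: "nat \<Rightarrow> (int \<Rightarrow> complex) \<Rightarrow> (int \<Rightarrow> complex) \<Rightarrow> complex" where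
  "pat_inner n a b = (\<Sum>j\<in>{0..<int n}. a j * cnj (b j))"

definition pat_hat :: "nat \<Rightarrow> (int \<Rightarrow> complex) \<Rightarrow> int \<Rightarrow> complex" where
  "pat_hat n a j = (1 / of_nat n) *
     (\<Sum>k\<in>{0..<int n}. exp (- 2 * pi * \<i> * of_int j * of_int k / of_nat n) * a k)"

end

theory Submission
  imports Defs
begin

text \<open>
  \<open>\<bbbF>\<^sub>p\<^sup>*\<close> is cyclic with generator \<open>\<alpha>\<close>, and \<open>\<alpha>\<^sup>e\<close> lies in the class of
  index \<open>e mod n\<close>. At shift \<open>0\<close> the correlation is therefore
  \<open>\<Sum>e<p-1. d (e mod n) * cnj (d' (e mod n))\<close>, i.e. \<open>(p-1)/n\<close> copies of \<open>\<langle>d,d'\<rangle>\<close>,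
  and Parseval for the normalised DFT gives the second form.
  At shift \<open>a = \<alpha>\<^sup>u\<close> substitute \<open>j = a(x - 1)\<close>: the summand becomes \<open>d\<close> at the class
  of \<open>a x\<close> times \<open>cnj d'\<close> at the class of \<open>a (x - 1)\<close>, i.e. the class indices of \<open>x\<close> and
  \<open>x - 1\<close> shifted by \<open>u\<close>. Grouping the \<open>x\<close> by this pair of indices \<open>(j, k)\<close>
  counts exactly the cyclotomic number \<open>(k, j)\<close>.
\<close>

lemma sum_atLeastLessThan_int_eq_sum_lessThan:
  "(\<Sum>k\<in>{0..<int n}. F k) = (\<Sum>i<n. F (int i))"
proof -
  have "{0..<int n} = int ` {..<n}"
    using image_int_atLeastLessThan[of 0 n] by (simp add: atLeast0LessThan)
  then show ?thesis by (simp add: sum.reindex)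
qed

lemma sum_lessThan_mult_mod:
  fixes D :: "int \<Rightarrow> 'a::comm_semiring_1"
  shows "(\<Sum>e<m * n. D (int e mod int n)) = of_nat m * (\<Sum>k\<in>{0..<int n}. D k)"
proof -
  have block: "(\<Sum>e\<in>{q * n..<q * n + n}. D (int e mod int n)) = (\<Sum>i<n. D (int i))" for q
  proof -
    have "(\<Sum>e\<in>{q * n..<q * n + n}. D (int e mod int n)) = (\<Sum>i<n. D (int (i + q * n) mod int n))"
      using sum.shift_bounds_nat_ivl[of "\<lambda>e. D (int e mod int n)" 0 "q * n" n]
      by (simp add: add.commute atLeast0LessThan)
    also have "\<dots> = (\<Sum>i<n. D (int i))"
      by (rule sum.cong) auto
    finally show ?thesis .
  qed
  have "(\<Sum>e<m * n. D (int e mod int n)) = (\<Sum>q<m. \<Sum>e\<in>{q * n..<q * n + n}. D (int e mod int n))"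
    by (simp add: sum.nat_group)
  also have "\<dots> = of_nat m * (\<Sum>k\<in>{0..<int n}. D k)"
    by (simp add: block sum_atLeastLessThan_int_eq_sum_lessThan)
  finally show ?thesis .
qed

lemma exp_2pi_div_eq_1_iff:
  assumes "n > 0"
  shows "exp (2 * pi * \<i> * of_int m / of_nat n) = 1 \<longleftrightarrow> int n dvd m"
proof
  assume "exp (2 * pi * \<i> * of_int m / of_nat n) = 1"
  then obtain k :: int where "2 * pi * real_of_int m / real n = real_of_int (2 * k) * pi"
    unfolding exp_eq_1 by auto
  then have "real_of_int m = real_of_int (k * int n)"
    using assms by (simp add: field_simps)
  then show "int n dvd m" by (metis dvd_triv_right of_int_eq_iff)
next
  assume "int n dvd m"
  then obtain k where "m = int n * k" by blast
  then have "2 * pi * \<i> * of_int m / of_nat n = \<i> * (of_int k * (of_real pi * 2))"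
    using assms by (simp add: field_simps)
  then show "exp (2 * pi * \<i> * of_int m / of_nat n) = 1" by simp
qed

lemma sum_power_root_of_unity:
  assumes "n > 0"
  shows "(\<Sum>i<n. exp (2 * pi * \<i> * of_int m / of_nat n) ^ i) = (if int n dvd m then of_nat n else 0)"
proof -
  define z where "z = exp (2 * pi * \<i> * of_int m / of_nat n)"
  have "z ^ n = exp (of_nat n * (2 * pi * \<i> * of_int m / of_nat n))"
    unfolding z_def by (simp only: exp_of_nat_mult)
  also have "\<dots> = exp (\<i> * (of_int m * (of_real pi * 2)))"
    using assms by (simp add: field_simps)
  finally have "z ^ n = 1" by simp
  then show ?thesis
    using exp_2pi_div_eq_1_iff[OF assms, of m] by (auto simp: z_def geometric_sum)
qed

lemma dft_kernel_orthogonal: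
  assumes n: "n > 0" and k: "k \<in> {0..<int n}" and l: "l \<in> {0..<int n}"
  shows "(\<Sum>j\<in>{0..<int n}. exp (- 2 * pi * \<i> * of_int j * of_int k / of_nat n)
           * cnj (exp (- 2 * pi * \<i> * of_int j * of_int l / of_nat n)))
         = (if k = l then of_nat n else 0)"
proof -
  have summand: "exp (- 2 * pi * \<i> * of_int (int i) * of_int k / of_nat n)
      * cnj (exp (- 2 * pi * \<i> * of_int (int i) * of_int l / of_nat n))
      = exp (2 * pi * \<i> * of_int (l - k) / of_nat n) ^ i" for i
  proof -
    have "exp (- 2 * pi * \<i> * of_int (int i) * of_int k / of_nat n)
        * cnj (exp (- 2 * pi * \<i> * of_int (int i) * of_int l / of_nat n))
        = exp (of_nat i * (2 * pi * \<i> * of_int (l - k) / of_nat n))"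
      by (simp only: exp_cnj exp_add[symmetric]) (simp add: field_simps diff_divide_distrib)
    then show ?thesis by (simp only: exp_of_nat_mult)
  qed
  have "int n dvd l - k \<longleftrightarrow> k = l"
    using k l dvd_imp_le_int[of "l - k" "int n"] by (cases "k = l") auto
  then show ?thesis
    by (simp only: sum_atLeastLessThan_int_eq_sum_lessThan summand sum_power_root_of_unity[OF n])
qed

lemma pat_inner_pat_hat:
  assumes n: "n > 0"
  shows "pat_inner n (pat_hat n a) (pat_hat n b) = pat_inner n a b / of_nat n"
proof -
  let ?E = "\<lambda>j k. exp (- 2 * pi * \<i> * of_int j * of_int k / of_nat n)"
  let ?I = "{0..<int n}"
  have "pat_inner n (pat_hat n a) (pat_hat n b)
     = (\<Sum>j\<in>?I. \<Sum>l\<in>?I. \<Sum>k\<in>?I. (a k * cnj (b l)) / of_nat n ^ 2 * (?E j k * cnj (?E j l)))"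
    unfolding pat_inner_def pat_hat_def
    by (simp add: sum_distrib_left sum_distrib_right cnj_sum power2_eq_square mult_ac)
  also have "\<dots> = (\<Sum>l\<in>?I. \<Sum>k\<in>?I. (a k * cnj (b l)) / of_nat n ^ 2 * (\<Sum>j\<in>?I. ?E j k * cnj (?E j l)))"
  proof -
    have "(\<Sum>j\<in>?I. \<Sum>l\<in>?I. \<Sum>k\<in>?I. (a k * cnj (b l)) / of_nat n ^ 2 * (?E j k * cnj (?E j l)))
        = (\<Sum>l\<in>?I. \<Sum>k\<in>?I. \<Sum>j\<in>?I. (a k * cnj (b l)) / of_nat n ^ 2 * (?E j k * cnj (?E j l)))"
      by (subst sum.swap) (intro sum.cong refl sum.swap)
    then show ?thesis by (simp only: sum_distrib_left)
  qed
  also have "\<dots> = (\<Sum>l\<in>?I. \<Sum>k\<in>?I. (a k * cnj (b l)) / of_nat n ^ 2 * (if k = l then of_nat n else 0))"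
    by (intro sum.cong refl) (simp only: dft_kernel_orthogonal[OF n])
  also have "\<dots> = pat_inner n a b / of_nat n"
    using n by (simp add: pat_inner_def if_distrib sum_divide_distrib power2_eq_square cong: if_cong)
  finally show ?thesis .
qed

lemma bij_betw_mult_diff_mod:
  fixes a c m :: int
  assumes "coprime a m"
  shows "bij_betw (\<lambda>x. (a * (x - c)) mod m) {0..<m} {0..<m}"
proof -
  have inj: "inj_on (\<lambda>x. (a * (x - c)) mod m) {0..<m}"
  proof (rule inj_onI)
    fix x y assume x: "x \<in> {0..<m}" and y: "y \<in> {0..<m}"
      and "(a * (x - c)) mod m = (a * (y - c)) mod m"
    then have "[a * (x - c) = a * (y - c)] (mod m)"
      by (simp add: cong_def)
    then have "[x - c = y - c] (mod m)"
      using cong_mult_lcancel[OF assms] by blast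
    then have "[x = y] (mod m)"
      by (metis cong_add_rcancel diff_add_cancel)
    then show "x = y"
      using x y by (simp add: cong_def)
  qed
  then have "(\<lambda>x. (a * (x - c)) mod m) ` {0..<m} = {0..<m}"
    by (intro endo_inj_surj) auto
  with inj show ?thesis by (simp add: bij_betw_def)
qed

lemma corr_mult_reindex:
  fixes f g :: "int \<Rightarrow> complex"
  assumes "coprime a (int p)"
    and f: "\<And>x y. [x = y] (mod int p) \<Longrightarrow> f x = f y"
    and g: "\<And>x y. [x = y] (mod int p) \<Longrightarrow> g x = g y"
  shows "corr p f g a = (\<Sum>x\<in>{0..<int p}. f (a * x) * cnj (g (a * (x - 1))))"
proof -
  let ?\<phi> = "\<lambda>x. (a * (x - 1)) mod int p"
  have "corr p f g a = (\<Sum>x\<in>{0..<int p}. f ((?\<phi> x + a) mod int p) * cnj (g (?\<phi> x)))"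
    unfolding corr_def
    by (rule sum.reindex_bij_betw[OF bij_betw_mult_diff_mod[OF assms(1)], symmetric])
  also have "\<dots> = (\<Sum>x\<in>{0..<int p}. f (a * x) * cnj (g (a * (x - 1))))"
  proof (rule sum.cong[OF refl])
    fix x
    have "a * (x - 1) + a = a * x"
      by (simp add: algebra_simps)
    then have "[(?\<phi> x + a) mod int p = a * x] (mod int p)"
      unfolding cong_def mod_add_left_eq by simp
    moreover have "[?\<phi> x = a * (x - 1)] (mod int p)"
      by (simp add: cong_def)
    ultimately show "f ((?\<phi> x + a) mod int p) * cnj (g (?\<phi> x)) = f (a * x) * cnj (g (a * (x - 1)))"
      using f g by metis
  qed
  finally show ?thesis .
qed

lemma cyc_class_cong:
  assumes "[h1 = h2] (mod int p)"
  shows "h1 \<in> cyc_class p n \<alpha> k \<longleftrightarrow> h2 \<in> cyc_class p n \<alpha> k"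
proof -
  have transfer: "h' \<in> cyc_class p n \<alpha> k"
    if "h \<in> cyc_class p n \<alpha> k" and hh': "[h' = h] (mod int p)" for h h'
  proof -
    have "\<exists>b. \<not> int p dvd b \<and> [h = int \<alpha> ^ nat (k mod int n) * b ^ n] (mod int p)"
      using that(1) by (simp add: cyc_class_def)
    then obtain b where "\<not> int p dvd b" and b: "[h = int \<alpha> ^ nat (k mod int n) * b ^ n] (mod int p)"
      by blast
    moreover have "[h' = int \<alpha> ^ nat (k mod int n) * b ^ n] (mod int p)"
      using cong_trans[OF hh' b] .
    ultimately show ?thesis by (auto simp: cyc_class_def)
  qed
  show ?thesis
    using transfer[of h1 h2] transfer[of h2 h1] assms cong_sym[OF assms] by blast
qed

lemma cyc_seq_cong:
  assumes "[h1 = h2] (mod int p)"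
  shows "cyc_seq p n \<alpha> d h1 = cyc_seq p n \<alpha> d h2"
  using assms cyc_class_cong[OF assms] cong_dvd_iff[OF assms] unfolding cyc_seq_def by simp

lemma cyc_seq_mod: "cyc_seq p n \<alpha> d (h mod int p) = cyc_seq p n \<alpha> d h"
  by (rule cyc_seq_cong) (simp add: cong_def)

locale cyclotomic_classes =
  fixes p n \<alpha> :: nat
  assumes n_pos: "n > 0" and prime_p: "prime p" and p_cong_1: "[p = 1] (mod n)"
    and primroot: "residue_primroot p \<alpha>"
begin

lemma p_gt_1: "p > 1"
  using prime_p prime_gt_1_nat by blast

lemma prime_int_p: "prime (int p)"
  using prime_p by simp

lemma n_dvd_p_minus_1: "n dvd p - 1"
  using p_cong_1 p_gt_1 by (metis cong_to_1_nat)

lemma int_n_dvd_p_minus_1: "int n dvd int p - 1"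
  using n_dvd_p_minus_1 p_gt_1 by (metis of_nat_1 of_nat_diff of_nat_dvd_iff less_imp_le)

lemma alpha_power_cong_iff: "[int \<alpha> ^ a = int \<alpha> ^ b] (mod int p) \<longleftrightarrow> [a = b] (mod (p - 1))"
proof -
  have "[int \<alpha> ^ a = int \<alpha> ^ b] (mod int p) \<longleftrightarrow> [\<alpha> ^ a = \<alpha> ^ b] (mod p)"
    by (metis cong_int_iff of_nat_power)
  also have "\<dots> \<longleftrightarrow> [a = b] (mod ord p \<alpha>)"
    using order_divides_expdiff primroot by (simp add: residue_primroot_def)
  finally show ?thesis
    using primroot prime_p by (simp add: residue_primroot_def totient_prime)
qed

lemma not_dvd_alpha_power: "\<not> int p dvd int \<alpha> ^ e"
proof
  assume "int p dvd int \<alpha> ^ e"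
  then have "p dvd \<alpha>"
    using prime_p prime_dvd_power by (metis int_dvd_int_iff of_nat_power)
  then show False
    using primroot prime_p by (metis residue_primroot_def coprime_absorb_left not_prime_unit)
qed

lemma discrete_log:
  assumes "\<not> int p dvd h"
  obtains e where "e < p - 1" and "[int \<alpha> ^ e = h] (mod int p)"
proof -
  have "nat (h mod int p) \<in> totatives p"
  proof -
    have "h mod int p \<noteq> 0" "h mod int p \<ge> 0" "h mod int p < int p"
      using assms p_gt_1 by (auto simp: dvd_eq_mod_eq_0)
    then show ?thesis
      using prime_p by (auto simp: totatives_prime)
  qed
  moreover have "bij_betw (\<lambda>i. \<alpha> ^ i mod p) {..<totient p} (totatives p)"
    using residue_primroot_is_generator p_gt_1 primroot by blast
  ultimately have "nat (h mod int p) \<in> (\<lambda>i. \<alpha> ^ i mod p) ` {..<totient p}"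
    by (simp add: bij_betw_def)
  then obtain e where e: "e \<in> {..<totient p}" "nat (h mod int p) = \<alpha> ^ e mod p"
    by (rule imageE)
  then have "h mod int p = int (\<alpha> ^ e mod p)"
    using p_gt_1 by (simp flip: e(2))
  then have "[int \<alpha> ^ e = h] (mod int p)"
    by (simp add: cong_def flip: of_nat_mod of_nat_power)
  with e(1) prime_p show ?thesis by (intro that) (simp_all add: totient_prime)
qed

lemma mem_cyc_class_iff:
  assumes h: "[int \<alpha> ^ e = h] (mod int p)"
  shows "h \<in> cyc_class p n \<alpha> k \<longleftrightarrow> [int e = k] (mod int n)"
proof
  assume "h \<in> cyc_class p n \<alpha> k"
  then have "\<exists>b. \<not> int p dvd b \<and> [h = int \<alpha> ^ nat (k mod int n) * b ^ n] (mod int p)"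
    by (simp add: cyc_class_def)
  then obtain b where "\<not> int p dvd b" and b: "[h = int \<alpha> ^ nat (k mod int n) * b ^ n] (mod int p)"
    by blast
  then obtain t where t: "[int \<alpha> ^ t = b] (mod int p)"
    using discrete_log by metis
  have "[int \<alpha> ^ (nat (k mod int n) + t * n) = int \<alpha> ^ nat (k mod int n) * b ^ n] (mod int p)"
    unfolding power_add power_mult by (intro cong_mult cong_pow t cong_refl)
  then have "[int \<alpha> ^ e = int \<alpha> ^ (nat (k mod int n) + t * n)] (mod int p)"
    using h b by (meson cong_sym cong_trans)
  then have "[e = nat (k mod int n) + t * n] (mod n)"
    using alpha_power_cong_iff n_dvd_p_minus_1 cong_dvd_modulus_nat by blast
  then have "[int e = k mod int n + int t * int n] (mod int n)"
    using n_pos by (simp add: cong_int_iff [symmetric])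
  then show "[int e = k] (mod int n)"
    by (simp add: cong_def)
next
  assume "[int e = k] (mod int n)"
  then have e: "nat (k mod int n) = e mod n"
    unfolding cong_def by (metis nat_int of_nat_mod)
  have "int \<alpha> ^ e = int \<alpha> ^ nat (k mod int n) * (int \<alpha> ^ (e div n)) ^ n"
    unfolding e power_mult [symmetric] power_add [symmetric] by simp
  then have "[h = int \<alpha> ^ nat (k mod int n) * (int \<alpha> ^ (e div n)) ^ n] (mod int p)"
    using h by (simp add: cong_sym)
  then show "h \<in> cyc_class p n \<alpha> k"
    unfolding cyc_class_def using not_dvd_alpha_power by blast
qed

lemma not_dvd_if_mem_cyc_class:
  assumes "h \<in> cyc_class p n \<alpha> k"
  shows "\<not> int p dvd h"
proof
  assume "int p dvd h"
  obtain b where "\<not> int p dvd b" and b: "[h = int \<alpha> ^ nat (k mod int n) * b ^ n] (mod int p)"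
    using assms by (auto simp: cyc_class_def)
  with \<open>int p dvd h\<close> have "int p dvd int \<alpha> ^ nat (k mod int n) * b ^ n"
    using cong_dvd_iff by blast
  with \<open>\<not> int p dvd b\<close> show False
    using prime_int_p not_dvd_alpha_power prime_dvd_mult_iff prime_dvd_power by metis
qed

definition cyc_index :: "int \<Rightarrow> int" where
  "cyc_index h = (THE k. k \<in> {0..<int n} \<and> h \<in> cyc_class p n \<alpha> k)"

lemma cyc_index_eq:
  assumes h: "[int \<alpha> ^ e = h] (mod int p)"
  shows "cyc_index h = int e mod int n"
  unfolding cyc_index_def
proof (rule the_equality)
  show "int e mod int n \<in> {0..<int n} \<and> h \<in> cyc_class p n \<alpha> (int e mod int n)"
    using n_pos by (simp add: mem_cyc_class_iff[OF h] cong_def)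
next
  fix k assume "k \<in> {0..<int n} \<and> h \<in> cyc_class p n \<alpha> k"
  then show "k = int e mod int n"
    by (auto simp: mem_cyc_class_iff[OF h] cong_def)
qed

lemma mem_cyc_class_iff_cyc_index:
  assumes "k \<in> {0..<int n}"
  shows "h \<in> cyc_class p n \<alpha> k \<longleftrightarrow> \<not> int p dvd h \<and> cyc_index h = k"
proof (cases "int p dvd h")
  case True
  then show ?thesis using not_dvd_if_mem_cyc_class by blast
next
  case False
  then obtain e where e: "[int \<alpha> ^ e = h] (mod int p)"
    using discrete_log by metis
  show ?thesis
    using assms False by (auto simp: mem_cyc_class_iff[OF e] cyc_index_eq[OF e] cong_def)
qed

lemma cyc_index_in_range:
  assumes "\<not> int p dvd h"
  shows "cyc_index h \<in> {0..<int n}"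
proof -
  obtain e where "[int \<alpha> ^ e = h] (mod int p)"
    using discrete_log assms by metis
  then show ?thesis
    using n_pos by (simp add: cyc_index_eq)
qed

lemma cyc_seq_eq_cyc_index:
  "\<not> int p dvd h \<Longrightarrow> cyc_seq p n \<alpha> d h = d (cyc_index h)"
  unfolding cyc_seq_def cyc_index_def by simp

lemma cyc_seq_alpha_power:
  "cyc_seq p n \<alpha> d (int \<alpha> ^ e) = d (int e mod int n)"
  using cyc_seq_eq_cyc_index[OF not_dvd_alpha_power] cyc_index_eq[OF cong_refl] by simp

lemma cyc_index_alpha_pow_mult:
  assumes "\<not> int p dvd h"
  shows "cyc_index (alpha_pow p \<alpha> u * h) = (cyc_index h + u) mod int n"
proof -
  obtain e where e: "[int \<alpha> ^ e = h] (mod int p)"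
    using discrete_log assms by metis
  define v where "v = nat (u mod (int p - 1))"
  have "[int \<alpha> ^ (v + e) = alpha_pow p \<alpha> u * h] (mod int p)"
    unfolding alpha_pow_def v_def power_add by (rule cong_mult[OF cong_refl e])
  then have "cyc_index (alpha_pow p \<alpha> u * h) = (int v + int e) mod int n"
    by (simp add: cyc_index_eq)
  also have "\<dots> = (u + int e) mod int n"
  proof -
    have "int v mod int n = u mod int n"
      using int_n_dvd_p_minus_1 p_gt_1 by (simp add: v_def mod_mod_cancel)
    then show ?thesis by (metis mod_add_left_eq)
  qed
  also have "\<dots> = (cyc_index h + u) mod int n"
    by (simp add: cyc_index_eq[OF e] mod_add_right_eq add.commute)
  finally show ?thesis .
qed

lemma bij_betw_alpha_power_mod: "bij_betw (\<lambda>e. int \<alpha> ^ e mod int p) {..<p - 1} {1..<int p}"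
proof -
  have "inj_on (\<lambda>e. int \<alpha> ^ e mod int p) {..<p - 1}"
  proof (rule inj_onI)
    fix a b assume "a \<in> {..<p - 1}" "b \<in> {..<p - 1}"
      and "int \<alpha> ^ a mod int p = int \<alpha> ^ b mod int p"
    then have "[int \<alpha> ^ a = int \<alpha> ^ b] (mod int p)"
      by (simp add: cong_def)
    then have "[a = b] (mod (p - 1))"
      by (simp add: alpha_power_cong_iff)
    with \<open>a \<in> {..<p - 1}\<close> \<open>b \<in> {..<p - 1}\<close> show "a = b"
      by (simp add: cong_less_modulus_unique_nat)
  qed
  moreover have "(\<lambda>e. int \<alpha> ^ e mod int p) ` {..<p - 1} \<subseteq> {1..<int p}"
  proof
    fix h assume "h \<in> (\<lambda>e. int \<alpha> ^ e mod int p) ` {..<p - 1}"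
    then obtain e where h: "h = int \<alpha> ^ e mod int p"
      by blast
    have "h \<noteq> 0"
      using not_dvd_alpha_power[of e] h by (simp add: dvd_eq_mod_eq_0)
    moreover have "0 \<le> h" "h < int p"
      using h p_gt_1 by simp_all
    ultimately show "h \<in> {1..<int p}"
      by simp
  qed
  moreover have "{1..<int p} \<subseteq> (\<lambda>e. int \<alpha> ^ e mod int p) ` {..<p - 1}"
  proof
    fix h assume h: "h \<in> {1..<int p}"
    then have "\<not> int p dvd h"
      by (auto simp: zdvd_not_zless)
    then obtain e where "e < p - 1" "[int \<alpha> ^ e = h] (mod int p)"
      using discrete_log by metis
    then have "h = int \<alpha> ^ e mod int p" and "e \<in> {..<p - 1}"
      using h by (simp_all add: cong_def)
    then show "h \<in> (\<lambda>e. int \<alpha> ^ e mod int p) ` {..<p - 1}"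
      by (rule image_eqI)
  qed
  ultimately show ?thesis
    unfolding bij_betw_def by blast
qed

lemma corr_zero:
  "corr p (cyc_seq p n \<alpha> d) (cyc_seq p n \<alpha> d') 0 = of_nat ((p - 1) div n) * pat_inner n d d'"
proof -
  let ?f = "cyc_seq p n \<alpha> d" and ?g = "cyc_seq p n \<alpha> d'"
  have "{0..<int p} = insert 0 {1..<int p}"
    using p_gt_1 by auto
  then have "corr p ?f ?g 0 = (\<Sum>h\<in>insert 0 {1..<int p}. ?f h * cnj (?g h))"
    unfolding corr_def by (intro sum.cong) auto
  also have "\<dots> = (\<Sum>h\<in>{1..<int p}. ?f h * cnj (?g h))"
    by (simp add: cyc_seq_def)
  also have "\<dots> = (\<Sum>e<p - 1. ?f (int \<alpha> ^ e mod int p) * cnj (?g (int \<alpha> ^ e mod int p)))"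
    by (rule sum.reindex_bij_betw[OF bij_betw_alpha_power_mod, symmetric])
  also have "\<dots> = (\<Sum>e<(p - 1) div n * n. d (int e mod int n) * cnj (d' (int e mod int n)))"
    using n_dvd_p_minus_1 by (simp add: cyc_seq_mod cyc_seq_alpha_power)
  also have "\<dots> = of_nat ((p - 1) div n) * pat_inner n d d'"
    unfolding pat_inner_def by (rule sum_lessThan_mult_mod)
  finally show ?thesis .
qed

lemma cyc_num_eq_card:
  assumes "j \<in> {0..<int n}" and "k \<in> {0..<int n}"
  shows "cyc_num p n \<alpha> k j = card {x \<in> {0..<int p}.
    \<not> int p dvd x \<and> \<not> int p dvd (x - 1) \<and> cyc_index x = j \<and> cyc_index (x - 1) = k}"
proof -
  have shifted: "(\<exists>b \<in> cyc_class p n \<alpha> k. [x = 1 + b] (mod int p)) \<longleftrightarrow> x - 1 \<in> cyc_class p n \<alpha> k"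
    for x
  proof
    assume "\<exists>b \<in> cyc_class p n \<alpha> k. [x = 1 + b] (mod int p)"
    then obtain b where b: "b \<in> cyc_class p n \<alpha> k" and "[x = 1 + b] (mod int p)"
      by blast
    then have "[x - 1 = b] (mod int p)"
      using cong_diff[OF _ cong_refl[of 1]] by fastforce
    with b show "x - 1 \<in> cyc_class p n \<alpha> k"
      using cyc_class_cong by blast
  next
    assume "x - 1 \<in> cyc_class p n \<alpha> k"
    then show "\<exists>b \<in> cyc_class p n \<alpha> k. [x = 1 + b] (mod int p)"
      by (intro bexI[of _ "x - 1"]) simp_all
  qed
  show ?thesis
    unfolding cyc_num_def shifted mem_cyc_class_iff_cyc_index[OF assms(1)]
      mem_cyc_class_iff_cyc_index[OF assms(2)]
    by (metis (lifting))
qed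

lemma cyc_seq_alpha_pow_mult:
  assumes "\<not> int p dvd h"
  shows "cyc_seq p n \<alpha> d (alpha_pow p \<alpha> u * h) = d ((cyc_index h + u) mod int n)"
proof -
  have "\<not> int p dvd alpha_pow p \<alpha> u * h"
    using assms not_dvd_alpha_power prime_int_p prime_dvd_mult_iff unfolding alpha_pow_def by blast
  then show ?thesis
    using assms by (simp add: cyc_seq_eq_cyc_index cyc_index_alpha_pow_mult)
qed

lemma corr_alpha_pow_eq_sum_nonzero_pairs:
  "corr p (cyc_seq p n \<alpha> d) (cyc_seq p n \<alpha> d') (alpha_pow p \<alpha> u)
   = (\<Sum>x \<in> {x \<in> {0..<int p}. \<not> int p dvd x \<and> \<not> int p dvd (x - 1)}.
        d ((cyc_index x + u) mod int n) * cnj (d' ((cyc_index (x - 1) + u) mod int n)))"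
proof -
  let ?f = "cyc_seq p n \<alpha> d" and ?g = "cyc_seq p n \<alpha> d'" and ?a = "alpha_pow p \<alpha> u"
  let ?F = "\<lambda>x. d ((cyc_index x + u) mod int n) * cnj (d' ((cyc_index (x - 1) + u) mod int n))"
  let ?P = "\<lambda>x. \<not> int p dvd x \<and> \<not> int p dvd (x - 1)"
  have a: "\<not> int p dvd ?a"
    unfolding alpha_pow_def by (rule not_dvd_alpha_power)
  then have "coprime ?a (int p)"
    using prime_imp_coprime[OF prime_int_p a] by (simp add: coprime_commute)
  then have "corr p ?f ?g ?a = (\<Sum>x\<in>{0..<int p}. ?f (?a * x) * cnj (?g (?a * (x - 1))))"
    by (rule corr_mult_reindex) (auto intro: cyc_seq_cong)
  also have "\<dots> = (\<Sum>x\<in>{0..<int p}. if ?P x then ?F x else 0)"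
  proof (rule sum.cong[OF refl])
    fix x
    show "?f (?a * x) * cnj (?g (?a * (x - 1))) = (if ?P x then ?F x else 0)"
    proof (cases "?P x")
      case True
      then show ?thesis by (simp add: cyc_seq_alpha_pow_mult)
    next
      case False
      then have "int p dvd ?a * x \<or> int p dvd ?a * (x - 1)"
        by auto
      with False show ?thesis
        by (auto simp: cyc_seq_def)
    qed
  qed
  also have "\<dots> = (\<Sum>x \<in> {x \<in> {0..<int p}. ?P x}. ?F x)"
    by (rule sum.inter_filter[symmetric]) simp
  finally show ?thesis .
qed

lemma corr_alpha_pow:
  "corr p (cyc_seq p n \<alpha> d) (cyc_seq p n \<alpha> d') (alpha_pow p \<alpha> u)
   = (\<Sum>j\<in>{0..<int n}. \<Sum>k\<in>{0..<int n}.
        of_nat (cyc_num p n \<alpha> k j) * d ((j + u) mod int n) * cnj (d' ((k + u) mod int n)))"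
proof -
  let ?I = "{0..<int n}" and ?\<kappa> = "\<lambda>x. (cyc_index x, cyc_index (x - 1))"
  define T where "T = {x \<in> {0..<int p}. \<not> int p dvd x \<and> \<not> int p dvd (x - 1)}"
  define F where "F = (\<lambda>(j, k). d ((j + u) mod int n) * cnj (d' ((k + u) mod int n)))"
  have "corr p (cyc_seq p n \<alpha> d) (cyc_seq p n \<alpha> d') (alpha_pow p \<alpha> u) = (\<Sum>x\<in>T. F (?\<kappa> x))"
    unfolding corr_alpha_pow_eq_sum_nonzero_pairs T_def F_def by simp
  also have "\<dots> = (\<Sum>jk\<in>?I \<times> ?I. of_nat (card {x \<in> T. ?\<kappa> x = jk}) * F jk)"
  proof (rule sum_fun_comp)
    show "finite T"
      unfolding T_def by (rule finite_subset[of _ "{0..<int p}"]) auto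
    show "?\<kappa> ` T \<subseteq> ?I \<times> ?I"
      unfolding T_def using cyc_index_in_range by blast
  qed simp
  also have "\<dots> = (\<Sum>j\<in>?I. \<Sum>k\<in>?I.
        of_nat (cyc_num p n \<alpha> k j) * d ((j + u) mod int n) * cnj (d' ((k + u) mod int n)))"
    unfolding sum.cartesian_product
  proof (rule sum.cong[OF refl], clarify)
    fix j k assume "j \<in> ?I" "k \<in> ?I"
    then show "of_nat (card {x \<in> T. ?\<kappa> x = (j, k)}) * F (j, k)
        = of_nat (cyc_num p n \<alpha> k j) * d ((j + u) mod int n) * cnj (d' ((k + u) mod int n))"
      by (simp add: cyc_num_eq_card T_def F_def conj_assoc)
  qed
  finally show ?thesis .
qed

end

theorem mainTheorem18:
  fixes n p \<alpha> :: nat and d d' :: "int \<Rightarrow> complex"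
  assumes "n > 0" and "prime p" and "[p = 1] (mod n)"
    and "residue_primroot p \<alpha>"
    and "\<And>k. d k = d (k mod int n)" and "\<And>k. d' k = d' (k mod int n)"
  shows "corr p (cyc_seq p n \<alpha> d) (cyc_seq p n \<alpha> d') 0
           = of_nat (p - 1) / of_nat n * pat_inner n d d'
       \<and> corr p (cyc_seq p n \<alpha> d) (cyc_seq p n \<alpha> d') 0
           = of_nat (p - 1) * pat_inner n (pat_hat n d) (pat_hat n d')
       \<and> (\<forall>u::int. corr p (cyc_seq p n \<alpha> d) (cyc_seq p n \<alpha> d') (alpha_pow p \<alpha> u)
           = (\<Sum>j\<in>{0..<int n}. \<Sum>k\<in>{0..<int n}.
                of_nat (cyc_num p n \<alpha> k j) * d ((j + u) mod int n) * cnj (d' ((k + u) mod int n))))"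
proof -
  interpret cyclotomic_classes p n \<alpha>
    using assms(1-4) by unfold_locales
  obtain m where m: "p - 1 = m * n"
    using n_dvd_p_minus_1 by (metis dvd_div_mult_self)
  then have "corr p (cyc_seq p n \<alpha> d) (cyc_seq p n \<alpha> d') 0 = of_nat m * pat_inner n d d'"
    using corr_zero assms(1) by simp
  moreover have "(of_nat (p - 1) :: complex) = of_nat m * of_nat n"
    unfolding m by simp
  ultimately show ?thesis
    using corr_alpha_pow pat_inner_pat_hat[OF assms(1)] assms(1) by simp
qed

end
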